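(* Let $\Gamma\curvearrowright X, I$ be a stratified dynamical ideal with permutation model $W[[X]]$. Then in $W[[X]]$, every set is either a countable union of finite sets or contains an injective image of $\omega$.
   Context: Work in ZFC. $V[[X]]$ is the well-founded model of ZFCA with set of atoms exactly $X$ in which every set of elements is represented by an element; a group action of $\Gamma$ on $X$ extends to $V[[X]]$ by $\gamma\cdot A=\{\gamma\cdot B:B\in A\}$. $\mathrm{stab}(A)=\{\gamma:\gamma\cdot A=A\}$, $\mathrm{pstab}(a)=\{\gamma:\gamma\cdot B=B\ \forall B\in a\}$. A dynamical ideal $\Gamma\curvearrowright X, I$: a group $\Gamma$ acting on $X$ and a $\Gamma$-invariant ideal $I$ on $X$ containing all singletons. Its permutation model $W[[X]]$ is the class of $A\in V[[X]]$ such that $A$ and every element of its transitive closure are symmetric, where $A$ is symmetric if $\mathrm{pstab}(b)\subseteq\mathrm{stab}(A)$ for some $b\in I$. The dynamical ideal is stratified if there are $\Gamma$-invariant ideals $I_n$ ($n\in\omega$) on $X$ such that (1) $I_0\subseteq I_1\subseteq\cdots$ and $I=\bigcup_n I_n$; (2) for every $n$ and all sets $a$ and $b_m$ ($m\in\omega$) in $I_n$ there are $\gamma_m\in\mathrm{pstab}(a)$ with $\bigcup_m\gamma_m\cdot b_m\in I_{n+1}$. *)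

theory Defs
  imports "HOL-Algebra.Group_Action"
begin

definition set_ideal :: "'x set \<Rightarrow> 'x set set \<Rightarrow> bool" where
  "set_ideal X I \<longleftrightarrow> I \<subseteq> Pow X \<and> {} \<in> I \<and>
     (\<forall>a\<in>I. \<forall>b. b \<subseteq> a \<longrightarrow> b \<in> I) \<and> (\<forall>a\<in>I. \<forall>b\<in>I. a \<union> b \<in> I)"

definition invariant_family :: "('g, 'm) monoid_scheme \<Rightarrow> ('g \<Rightarrow> 'x \<Rightarrow> 'x) \<Rightarrow> 'x set set \<Rightarrow> bool" where
  "invariant_family G \<phi> I \<longleftrightarrow> (\<forall>g\<in>carrier G. \<forall>a\<in>I. \<phi> g ` a \<in> I)"

definition pstab :: "('g, 'm) monoid_scheme \<Rightarrow> ('g \<Rightarrow> 'x \<Rightarrow> 'x) \<Rightarrow> 'x set \<Rightarrow> 'g set" where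
  "pstab G \<phi> a = {g \<in> carrier G. \<forall>x\<in>a. \<phi> g x = x}"

definition dynamical_ideal :: "('g, 'm) monoid_scheme \<Rightarrow> 'x set \<Rightarrow> ('g \<Rightarrow> 'x \<Rightarrow> 'x) \<Rightarrow> 'x set set \<Rightarrow> bool" where
  "dynamical_ideal G X \<phi> I \<longleftrightarrow> group_action G X \<phi> \<and> set_ideal X I \<and>
     invariant_family G \<phi> I \<and> (\<forall>x\<in>X. {x} \<in> I)"

definition stratified :: "('g, 'm) monoid_scheme \<Rightarrow> 'x set \<Rightarrow> ('g \<Rightarrow> 'x \<Rightarrow> 'x) \<Rightarrow> 'x set set \<Rightarrow> bool" where
  "stratified G X \<phi> I \<longleftrightarrow> dynamical_ideal G X \<phi> I \<and>
     (\<exists>In :: nat \<Rightarrow> 'x set set.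
        (\<forall>n. set_ideal X (In n) \<and> invariant_family G \<phi> (In n)) \<and>
        (\<forall>n. In n \<subseteq> In (Suc n)) \<and> I = (\<Union>n. In n) \<and>
        (\<forall>n a (bs :: nat \<Rightarrow> 'x set). a \<in> In n \<longrightarrow> (\<forall>m. bs m \<in> In n) \<longrightarrow>
            (\<exists>gs :: nat \<Rightarrow> 'g. (\<forall>m. gs m \<in> pstab G \<phi> a) \<and>
                 (\<Union>m. \<phi> (gs m) ` bs m) \<in> In (Suc n))))"

text \<open>Elements of V[[X]] are represented (Mostowski/Aczel style) by nodes of a
well-founded membership graph: E c d means "c is an element of d", and
lab c = Some x means that c is the atom x (atoms have no elements).
Two nodes (possibly w.r.t. two labellings) denote the same object of V[[X]]
iff they are bisimilar.\<close>

definition vbisim :: "('c \<Rightarrow> 'c \<Rightarrow> bool) \<Rightarrow> ('c \<Rightarrow> 'x option) \<Rightarrow> ('c \<Rightarrow> 'x option)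
     \<Rightarrow> ('c \<Rightarrow> 'c \<Rightarrow> bool) \<Rightarrow> bool" where
  "vbisim E l1 l2 R \<longleftrightarrow> (\<forall>c d. R c d \<longrightarrow> l1 c = l2 d \<and>
      (\<forall>c'. E c' c \<longrightarrow> (\<exists>d'. E d' d \<and> R c' d')) \<and>
      (\<forall>d'. E d' d \<longrightarrow> (\<exists>c'. E c' c \<and> R c' d')))"

definition same_obj :: "('c \<Rightarrow> 'c \<Rightarrow> bool) \<Rightarrow> ('c \<Rightarrow> 'x option) \<Rightarrow> ('c \<Rightarrow> 'x option)
     \<Rightarrow> 'c \<Rightarrow> 'c \<Rightarrow> bool" where
  "same_obj E l1 l2 c d \<longleftrightarrow> (\<exists>R. vbisim E l1 l2 R \<and> R c d)"

definition presentation :: "'x set \<Rightarrow> ('c \<Rightarrow> 'c \<Rightarrow> bool) \<Rightarrow> ('c \<Rightarrow> 'x option) \<Rightarrow> bool" where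
  "presentation X E lab \<longleftrightarrow> wfP E \<and> (\<forall>c x. lab c = Some x \<longrightarrow> x \<in> X) \<and>
     (\<forall>c d. lab d \<noteq> None \<longrightarrow> \<not> E c d) \<and>
     (\<forall>c d. same_obj E lab lab c d \<longrightarrow> c = d)"

text \<open>Relabelling by g: node c w.r.t. this labelling denotes g \<cdot> (object of c).\<close>
definition act_lab :: "('g \<Rightarrow> 'x \<Rightarrow> 'x) \<Rightarrow> 'g \<Rightarrow> ('c \<Rightarrow> 'x option) \<Rightarrow> ('c \<Rightarrow> 'x option)" where
  "act_lab \<phi> g lab = map_option (\<phi> g) \<circ> lab"

definition moves_to :: "('g \<Rightarrow> 'x \<Rightarrow> 'x) \<Rightarrow> ('c \<Rightarrow> 'c \<Rightarrow> bool) \<Rightarrow> ('c \<Rightarrow> 'x option) \<Rightarrow> 'g \<Rightarrow> 'c \<Rightarrow> 'c \<Rightarrow> bool" where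
  "moves_to \<phi> E lab g c d \<longleftrightarrow> same_obj E (act_lab \<phi> g lab) lab c d"

text \<open>g \<cdot> F = F for a set F of nodes (i.e. for the set whose elements are the objects denoted by F)\<close>
definition fixes_set :: "('g \<Rightarrow> 'x \<Rightarrow> 'x) \<Rightarrow> ('c \<Rightarrow> 'c \<Rightarrow> bool) \<Rightarrow> ('c \<Rightarrow> 'x option) \<Rightarrow> 'g \<Rightarrow> 'c set \<Rightarrow> bool" where
  "fixes_set \<phi> E lab g F \<longleftrightarrow> (\<forall>y\<in>F. \<exists>z\<in>F. moves_to \<phi> E lab g y z) \<and>
                              (\<forall>z\<in>F. \<exists>y\<in>F. moves_to \<phi> E lab g y z)"

definition symmetric_node :: "('g, 'm) monoid_scheme \<Rightarrow> ('g \<Rightarrow> 'x \<Rightarrow> 'x) \<Rightarrow> 'x set set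
     \<Rightarrow> ('c \<Rightarrow> 'c \<Rightarrow> bool) \<Rightarrow> ('c \<Rightarrow> 'x option) \<Rightarrow> 'c \<Rightarrow> bool" where
  "symmetric_node G \<phi> I E lab c \<longleftrightarrow>
     (\<exists>b\<in>I. \<forall>g\<in>pstab G \<phi> b. moves_to \<phi> E lab g c c)"

definition in_W :: "('g, 'm) monoid_scheme \<Rightarrow> ('g \<Rightarrow> 'x \<Rightarrow> 'x) \<Rightarrow> 'x set set
     \<Rightarrow> ('c \<Rightarrow> 'c \<Rightarrow> bool) \<Rightarrow> ('c \<Rightarrow> 'x option) \<Rightarrow> 'c \<Rightarrow> bool" where
  "in_W G \<phi> I E lab c \<longleftrightarrow> (\<forall>d. E\<^sup>*\<^sup>* d c \<longrightarrow> symmetric_node G \<phi> I E lab d)"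

end

theory Submission
  imports Defs
begin

text \<open>
  Fix a support \<open>a \<in> I\<^sub>k\<^sub>0\<close> of \<open>A\<close>. If a single \<open>d \<in> I\<close> supports infinitely many elements
  of \<open>A\<close>, these give an injective image of \<open>\<omega>\<close>. Otherwise, for \<open>k \<ge> k\<^sub>0\<close> only finitely many
  elements of \<open>A\<close> have a support in \<open>I\<^sub>k\<close>: given infinitely many, \<open>B\<^sub>0, B\<^sub>1, \<dots>\<close> with supports
  \<open>c\<^sub>i \<in> I\<^sub>k\<close>, stratification yields \<open>\<gamma>\<^sub>m \<in> pstab(a)\<close> such that a single \<open>d \<in> I\<^sub>k\<^sub>+\<^sub>1\<close> contains
  every \<open>\<gamma>\<^sub>m \<cdot> (c\<^sub>0 \<union> \<dots> \<union> c\<^sub>m)\<close>; then \<open>\<gamma>\<^sub>m \<cdot> B\<^sub>0, \<dots>, \<gamma>\<^sub>m \<cdot> B\<^sub>m\<close> are \<open>m + 1\<close> distinct elements of \<open>A\<close>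
  supported by \<open>d\<close>, for every \<open>m\<close>. These finite sets are fixed by \<open>pstab(a)\<close>, because \<open>I\<^sub>k\<close> is
  invariant, and they exhaust \<open>A\<close> since every element of \<open>A\<close> lies in \<open>W[[X]]\<close>.
\<close>

lemma vbisim_map_option:
  "vbisim E l1 l2 R \<Longrightarrow> vbisim E (map_option f \<circ> l1) (map_option f \<circ> l2) R"
  unfolding vbisim_def comp_def by metis

lemma vbisim_converse: "vbisim E l1 l2 R \<Longrightarrow> vbisim E l2 l1 R\<inverse>\<inverse>"
  unfolding vbisim_def by simp

lemma vbisim_relcompp:
  assumes R1: "vbisim E l1 l2 R1" and R2: "vbisim E l2 l3 R2"
  shows "vbisim E l1 l3 (R1 OO R2)"
  unfolding vbisim_def
proof (intro allI impI conjI)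
  fix c d assume "(R1 OO R2) c d"
  then obtain b where b: "R1 c b" "R2 b d"
    by blast
  show "l1 c = l3 d"
    using R1 R2 b unfolding vbisim_def by simp
  show "\<exists>d'. E d' d \<and> (R1 OO R2) c' d'" if "E c' c" for c'
  proof -
    obtain b' where "E b' b" "R1 c' b'"
      using R1 b(1) \<open>E c' c\<close> unfolding vbisim_def by blast
    moreover obtain d' where "E d' d" "R2 b' d'"
      using R2 b(2) \<open>E b' b\<close> unfolding vbisim_def by blast
    ultimately show ?thesis
      by blast
  qed
  show "\<exists>c'. E c' c \<and> (R1 OO R2) c' d'" if "E d' d" for d'
  proof -
    obtain b' where "E b' b" "R2 b' d'"
      using R2 b(2) \<open>E d' d\<close> unfolding vbisim_def by blast
    moreover obtain c' where "E c' c" "R1 c' b'"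
      using R1 b(1) \<open>E b' b\<close> unfolding vbisim_def by blast
    ultimately show ?thesis
      by blast
  qed
qed

lemma vbisim_eq: "vbisim E l l (=)"
  unfolding vbisim_def by blast

lemma set_ideal_finite_UN:
  assumes "set_ideal X J" "finite S" "\<And>i. i \<in> S \<Longrightarrow> c i \<in> J"
  shows "(\<Union>i\<in>S. c i) \<in> J"
  using assms(2,3)
proof (induction S rule: finite_induct)
  case empty
  then show ?case
    using assms(1) by (simp add: set_ideal_def)
next
  case (insert i S)
  have "\<forall>a\<in>J. \<forall>b\<in>J. a \<union> b \<in> J"
    using assms(1) by (simp add: set_ideal_def)
  then show ?case
    using insert by simp
qed

lemma set_ideal_member_subset: "set_ideal X J \<Longrightarrow> b \<in> J \<Longrightarrow> b \<subseteq> X"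
  unfolding set_ideal_def by blast

lemma pstab_antimono: "b \<subseteq> b' \<Longrightarrow> pstab G \<phi> b' \<subseteq> pstab G \<phi> b"
  by (auto simp: pstab_def)

locale presented_action = group_action G X \<phi>
  for G :: "('g, 'm) monoid_scheme" (structure) and X :: "'x set" and \<phi> +
  fixes E :: "'c \<Rightarrow> 'c \<Rightarrow> bool" and lab :: "'c \<Rightarrow> 'x option"
  assumes presentation: "presentation X E lab"
begin

sublocale group G
  using group_hom group_hom.axioms(1) by auto

definition supports :: "'x set \<Rightarrow> 'c \<Rightarrow> bool" where
  "supports b y \<longleftrightarrow> (\<forall>g\<in>pstab G \<phi> b. moves_to \<phi> E lab g y y)"

definition members_supported_by :: "'x set \<Rightarrow> 'c \<Rightarrow> 'c set" where
  "members_supported_by b A = {y. E y A \<and> supports b y}"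

definition members_supported_in :: "'x set set \<Rightarrow> 'c \<Rightarrow> 'c set" where
  "members_supported_in J A = {y. E y A \<and> (\<exists>c\<in>J. supports c y)}"

lemma lab_in_X: "lab c = Some x \<Longrightarrow> x \<in> X"
  using presentation unfolding presentation_def by blast

lemma act_lab_mult:
  assumes "h \<in> carrier G" "g \<in> carrier G"
  shows "act_lab \<phi> h (act_lab \<phi> g lab) = act_lab \<phi> (h \<otimes> g) lab"
proof
  fix c
  show "act_lab \<phi> h (act_lab \<phi> g lab) c = act_lab \<phi> (h \<otimes> g) lab c"
    using lab_in_X composition_rule[OF _ assms] by (cases "lab c") (auto simp: act_lab_def)
qed

lemma act_lab_one: "act_lab \<phi> \<one> lab = lab"
proof
  fix c
  show "act_lab \<phi> \<one> lab c = lab c"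
  proof (cases "lab c")
    case (Some x)
    then have "\<phi> \<one> x = x"
      using lab_in_X id_eq_one by (metis restrict_apply')
    then show ?thesis
      using Some by (simp add: act_lab_def)
  qed (simp add: act_lab_def)
qed

lemma moves_to_mult:
  assumes "g \<in> carrier G" "h \<in> carrier G" "moves_to \<phi> E lab g x y" "moves_to \<phi> E lab h y z"
  shows "moves_to \<phi> E lab (h \<otimes> g) x z"
proof -
  obtain R1 where R1: "vbisim E (act_lab \<phi> g lab) lab R1" "R1 x y"
    using assms(3) unfolding moves_to_def same_obj_def by blast
  obtain R2 where R2: "vbisim E (act_lab \<phi> h lab) lab R2" "R2 y z"
    using assms(4) unfolding moves_to_def same_obj_def by blast
  have "vbisim E (act_lab \<phi> h (act_lab \<phi> g lab)) (act_lab \<phi> h lab) R1"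
    using vbisim_map_option[OF R1(1), of "\<phi> h"] unfolding act_lab_def by simp
  then have "vbisim E (act_lab \<phi> (h \<otimes> g) lab) (act_lab \<phi> h lab) R1"
    using act_lab_mult assms(1,2) by simp
  from vbisim_relcompp[OF this R2(1)] R1(2) R2(2) show ?thesis
    unfolding moves_to_def same_obj_def by blast
qed

lemma moves_to_inv:
  assumes "g \<in> carrier G" "moves_to \<phi> E lab g x y"
  shows "moves_to \<phi> E lab (inv g) y x"
proof -
  obtain R where R: "vbisim E (act_lab \<phi> g lab) lab R" "R x y"
    using assms(2) unfolding moves_to_def same_obj_def by blast
  have "vbisim E (act_lab \<phi> (inv g) lab) (act_lab \<phi> (inv g) (act_lab \<phi> g lab)) R\<inverse>\<inverse>"
    using vbisim_map_option[OF vbisim_converse[OF R(1)], of "\<phi> (inv g)"]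
    unfolding act_lab_def by simp
  then have "vbisim E (act_lab \<phi> (inv g) lab) lab R\<inverse>\<inverse>"
    using act_lab_mult[of "inv g" g] assms(1) act_lab_one by simp
  then show ?thesis
    using R(2) unfolding moves_to_def same_obj_def by blast
qed

lemma moves_to_one_iff: "moves_to \<phi> E lab \<one> x y \<longleftrightarrow> x = y"
  using presentation vbisim_eq
  unfolding moves_to_def act_lab_one presentation_def same_obj_def by blast

text \<open>Extensionality of the presentation makes \<open>moves_to \<phi> E lab g\<close> a partial injection.\<close>

lemma moves_to_unique:
  assumes "g \<in> carrier G" "moves_to \<phi> E lab g x y" "moves_to \<phi> E lab g x z"
  shows "y = z"
proof -
  have "moves_to \<phi> E lab (g \<otimes> inv g) y z"
    using moves_to_mult[OF _ assms(1) moves_to_inv[OF assms(1,2)] assms(3)] assms(1) by simp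
  then show ?thesis
    using moves_to_one_iff assms(1) by simp
qed

lemma moves_to_inj:
  assumes "g \<in> carrier G" "moves_to \<phi> E lab g x z" "moves_to \<phi> E lab g y z"
  shows "x = y"
  using moves_to_unique[OF _ moves_to_inv[OF assms(1,2)] moves_to_inv[OF assms(1,3)]] assms(1)
  by simp

lemma moves_to_member:
  assumes "moves_to \<phi> E lab g A A" "E y A"
  shows "\<exists>z. E z A \<and> moves_to \<phi> E lab g y z"
  using assms unfolding moves_to_def same_obj_def vbisim_def by blast

lemma moves_to_member_back:
  assumes "moves_to \<phi> E lab g A A" "E z A"
  shows "\<exists>y. E y A \<and> moves_to \<phi> E lab g y z"
  using assms unfolding moves_to_def same_obj_def vbisim_def by blast

lemma supports_mono:
  assumes "b \<subseteq> b'" "supports b y"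
  shows "supports b' y"
  using assms(2) pstab_antimono[OF assms(1), of G \<phi>] unfolding supports_def by blast

lemma pstab_conjugate:
  assumes g: "g \<in> carrier G" and c: "c \<subseteq> X" and h: "h \<in> pstab G \<phi> (\<phi> g ` c)"
  shows "inv g \<otimes> h \<otimes> g \<in> pstab G \<phi> c"
  unfolding pstab_def
proof (intro CollectI conjI ballI)
  have hG: "h \<in> carrier G"
    using h by (simp add: pstab_def)
  then show "inv g \<otimes> h \<otimes> g \<in> carrier G"
    using g by simp
  fix x assume x: "x \<in> c"
  then have xX: "x \<in> X"
    using c by auto
  have "\<phi> h (\<phi> g x) = \<phi> g x"
    using h x unfolding pstab_def by auto
  then have "\<phi> (inv g \<otimes> h \<otimes> g) x = \<phi> (inv g) (\<phi> g x)"
    using composition_rule xX element_image[OF g xX] g hG by simp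
  also have "\<dots> = x"
    using orbit_sym_aux[OF g xX refl] .
  finally show "\<phi> (inv g \<otimes> h \<otimes> g) x = x" .
qed

lemma supports_moves_to:
  assumes g: "g \<in> carrier G" and "c \<subseteq> X" "supports c y" and m: "moves_to \<phi> E lab g y z"
  shows "supports (\<phi> g ` c) z"
  unfolding supports_def
proof
  fix h assume h: "h \<in> pstab G \<phi> (\<phi> g ` c)"
  then have hG: "h \<in> carrier G"
    by (simp add: pstab_def)
  have "moves_to \<phi> E lab (inv g \<otimes> h \<otimes> g) y y"
    using assms(3) pstab_conjugate[OF g assms(2) h] unfolding supports_def by blast
  then have "moves_to \<phi> E lab ((inv g \<otimes> h \<otimes> g) \<otimes> inv g) z y"
    using moves_to_mult[OF _ _ moves_to_inv[OF g m]] g hG by simp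
  then have "moves_to \<phi> E lab (g \<otimes> ((inv g \<otimes> h \<otimes> g) \<otimes> inv g)) z z"
    using moves_to_mult[OF _ g _ m] g hG by simp
  moreover have "g \<otimes> ((inv g \<otimes> h \<otimes> g) \<otimes> inv g) = h"
    using g hG by (simp add: m_assoc[symmetric] r_inv) (simp add: m_assoc)
  ultimately show "moves_to \<phi> E lab h z z"
    by simp
qed

lemma in_W_supported:
  assumes "in_W G \<phi> I E lab A" "E\<^sup>*\<^sup>* y A"
  shows "\<exists>b\<in>I. supports b y"
proof -
  have "symmetric_node G \<phi> I E lab y"
    using assms unfolding in_W_def by blast
  then show ?thesis
    unfolding symmetric_node_def supports_def .
qed

lemma card_le_members_supported_by:
  assumes g: "g \<in> carrier G" "moves_to \<phi> E lab g A A"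
    and B: "inj_on B J" "\<And>i. i \<in> J \<Longrightarrow> E (B i) A \<and> c i \<subseteq> X \<and> supports (c i) (B i)"
    and d: "(\<Union>i\<in>J. \<phi> g ` c i) \<subseteq> d" and fin: "finite (members_supported_by d A)"
  shows "card J \<le> card (members_supported_by d A)"
proof -
  have "\<forall>i\<in>J. \<exists>z. E z A \<and> moves_to \<phi> E lab g (B i) z"
    using moves_to_member[OF g(2)] B(2) by blast
  then obtain h where h: "\<And>i. i \<in> J \<Longrightarrow> E (h i) A \<and> moves_to \<phi> E lab g (B i) (h i)"
    by metis
  have "inj_on h J"
    using B(1) moves_to_inj[OF g(1)] h by (metis inj_on_def)
  moreover have "h ` J \<subseteq> members_supported_by d A"
  proof
    fix y assume "y \<in> h ` J"
    then obtain i where i: "i \<in> J" "y = h i"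
      by blast
    have "supports (\<phi> g ` c i) y"
      using supports_moves_to[OF g(1)] B(2)[OF i(1)] h[OF i(1)] i(2) by blast
    then show "y \<in> members_supported_by d A"
      using supports_mono d i h unfolding members_supported_by_def by blast
  qed
  ultimately show ?thesis
    using card_inj_on_le fin by blast
qed

lemma finite_members_supported_in:
  assumes J: "set_ideal X J" and a: "supports a A"
    and step: "\<And>bs :: nat \<Rightarrow> 'x set. (\<forall>m. bs m \<in> J) \<Longrightarrow>
        \<exists>gs :: nat \<Rightarrow> 'g. (\<forall>m. gs m \<in> pstab G \<phi> a) \<and> (\<Union>m. \<phi> (gs m) ` bs m) \<in> K"
    and fin: "\<And>d. d \<in> K \<Longrightarrow> finite (members_supported_by d A)"
  shows "finite (members_supported_in J A)"
proof (rule ccontr)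
  assume "infinite (members_supported_in J A)"
  then obtain B :: "nat \<Rightarrow> 'c" where B: "inj B" "range B \<subseteq> members_supported_in J A"
    using infinite_countable_subset by blast
  then have "\<forall>i. \<exists>c. c \<in> J \<and> supports c (B i)"
    unfolding members_supported_in_def by blast
  then obtain c where c: "\<And>i. c i \<in> J \<and> supports (c i) (B i)"
    by metis
  have cX: "c i \<subseteq> X" for i
    using c set_ideal_member_subset[OF J] by blast
  have initial_unions: "\<forall>m. (\<Union>i\<in>{..m}. c i) \<in> J"
    using set_ideal_finite_UN[OF J] c by blast
  obtain gs :: "nat \<Rightarrow> 'g" where gs: "\<And>m. gs m \<in> pstab G \<phi> a"
    and dK: "(\<Union>m. \<phi> (gs m) ` (\<Union>i\<in>{..m}. c i)) \<in> K"
    using step[OF initial_unions] by blast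
  define d where "d = (\<Union>m. \<phi> (gs m) ` (\<Union>i\<in>{..m}. c i))"
  have "card {..m} \<le> card (members_supported_by d A)" for m :: nat
  proof (rule card_le_members_supported_by)
    show "gs m \<in> carrier G"
      using gs[of m] unfolding pstab_def by blast
    show "moves_to \<phi> E lab (gs m) A A"
      using gs[of m] a unfolding supports_def by blast
    show "inj_on B {..m}"
      using B(1) inj_on_subset by blast
    show "E (B i) A \<and> c i \<subseteq> X \<and> supports (c i) (B i)" for i
      using B(2) c cX unfolding members_supported_in_def by blast
    show "(\<Union>i\<in>{..m}. \<phi> (gs m) ` c i) \<subseteq> d"
      unfolding d_def by blast
    show "finite (members_supported_by d A)"
      using fin dK d_def by blast
  qed
  from this[of "card (members_supported_by d A)"] show False
    by simp
qed

lemma infinite_members_supported_by_injection: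
  assumes "infinite (members_supported_by d A)"
  shows "\<exists>f :: nat \<Rightarrow> 'c. inj f \<and> (\<forall>n. E (f n) A) \<and>
    (\<forall>g\<in>pstab G \<phi> d. \<forall>n. moves_to \<phi> E lab g (f n) (f n))"
proof -
  obtain f :: "nat \<Rightarrow> 'c" where f: "inj f" "range f \<subseteq> members_supported_by d A"
    using infinite_countable_subset[OF assms] by blast
  then show ?thesis
    unfolding members_supported_by_def supports_def by blast
qed

lemma members_supported_in_moves_to:
  assumes J: "set_ideal X J" "invariant_family G \<phi> J"
    and g: "g \<in> carrier G" "moves_to \<phi> E lab g A A"
    and y: "y \<in> members_supported_in J A" and m: "moves_to \<phi> E lab g y z"
  shows "z \<in> members_supported_in J A"
proof -
  obtain c where c: "c \<in> J" "supports c y" and "E y A"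
    using y unfolding members_supported_in_def by blast
  then obtain z' where "E z' A" "moves_to \<phi> E lab g y z'"
    using moves_to_member[OF g(2)] by blast
  then have "E z A"
    using moves_to_unique[OF g(1) m] by simp
  moreover have "supports (\<phi> g ` c) z"
    using supports_moves_to[OF g(1) set_ideal_member_subset[OF J(1) c(1)] c(2) m] .
  moreover have "\<phi> g ` c \<in> J"
    using J(2) c(1) g(1) unfolding invariant_family_def by blast
  ultimately show ?thesis
    unfolding members_supported_in_def by blast
qed

lemma fixes_set_members_supported_in:
  assumes J: "set_ideal X J" "invariant_family G \<phi> J"
    and a: "supports a A" and g: "g \<in> pstab G \<phi> a"
  shows "fixes_set \<phi> E lab g (members_supported_in J A)"
proof -
  have gG: "g \<in> carrier G"
    using g unfolding pstab_def by blast
  have gA: "moves_to \<phi> E lab g A A"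
    using g a unfolding supports_def by blast
  have "\<exists>z\<in>members_supported_in J A. moves_to \<phi> E lab g y z"
    if y: "y \<in> members_supported_in J A" for y
  proof -
    obtain z where "moves_to \<phi> E lab g y z"
      using y moves_to_member[OF gA] unfolding members_supported_in_def by blast
    then show ?thesis
      using members_supported_in_moves_to[OF J gG gA y] by blast
  qed
  moreover have "\<exists>y\<in>members_supported_in J A. moves_to \<phi> E lab g y z"
    if z: "z \<in> members_supported_in J A" for z
  proof -
    obtain y where m: "moves_to \<phi> E lab g y z"
      using z moves_to_member_back[OF gA] unfolding members_supported_in_def by blast
    have "y \<in> members_supported_in J A"
      using members_supported_in_moves_to[OF J _ moves_to_inv[OF gG gA] z moves_to_inv[OF gG m]]
        gG by simp
    then show ?thesis
      using m by blast
  qed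
  ultimately show ?thesis
    unfolding fixes_set_def by blast
qed

end

locale stratified_presentation = presented_action G X \<phi> E lab
  for G :: "('g, 'm) monoid_scheme" (structure) and X :: "'x set" and \<phi>
    and E :: "'c \<Rightarrow> 'c \<Rightarrow> bool" and lab :: "'c \<Rightarrow> 'x option" +
  fixes In :: "nat \<Rightarrow> 'x set set"
  assumes stratum_ideal: "set_ideal X (In n)"
    and stratum_invariant: "invariant_family G \<phi> (In n)"
    and stratum_Suc: "In n \<subseteq> In (Suc n)"
    and stratum_step: "a \<in> In n \<Longrightarrow> \<forall>m. bs m \<in> In n \<Longrightarrow>
      \<exists>gs :: nat \<Rightarrow> 'g. (\<forall>m. gs m \<in> pstab G \<phi> a) \<and> (\<Union>m. \<phi> (gs m) ` bs m) \<in> In (Suc n)"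
begin

lemma stratum_mono: "k \<le> j \<Longrightarrow> In k \<subseteq> In j"
  using lift_Suc_mono_le[of In] stratum_Suc by blast

lemma UN_members_supported_in_strata:
  assumes "in_W G \<phi> (\<Union>n. In n) E lab A"
  shows "(\<Union>n. members_supported_in (In (n + k)) A) = {y. E y A}"
proof
  show "(\<Union>n. members_supported_in (In (n + k)) A) \<subseteq> {y. E y A}"
    unfolding members_supported_in_def by blast
  show "{y. E y A} \<subseteq> (\<Union>n. members_supported_in (In (n + k)) A)"
  proof
    fix y assume "y \<in> {y. E y A}"
    then have y: "E y A"
      by simp
    then obtain b where b: "b \<in> (\<Union>n. In n)" "supports b y"
      using in_W_supported[OF assms r_into_rtranclp] by blast
    then obtain j where "b \<in> In j"
      by blast
    then have "b \<in> In (j + k)"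
      using stratum_mono[of j "j + k"] by auto
    then have "y \<in> members_supported_in (In (j + k)) A"
      using y b(2) unfolding members_supported_in_def by blast
    then show "y \<in> (\<Union>n. members_supported_in (In (n + k)) A)"
      by blast
  qed
qed

lemma members_countable_union_of_finite:
  assumes W: "in_W G \<phi> (\<Union>n. In n) E lab A" and a: "a \<in> In k" "supports a A"
    and fin: "\<And>d. d \<in> (\<Union>n. In n) \<Longrightarrow> finite (members_supported_by d A)"
  shows "\<exists>F :: nat \<Rightarrow> 'c set.
      (\<forall>n. finite (F n) \<and> F n \<subseteq> {d. E d A}) \<and> (\<Union>n. F n) = {d. E d A} \<and>
      (\<exists>b\<in>(\<Union>n. In n). \<forall>g\<in>pstab G \<phi> b. \<forall>n. fixes_set \<phi> E lab g (F n))"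
proof (intro exI[of _ "\<lambda>n. members_supported_in (In (n + k)) A"] conjI allI ballI)
  fix n
  have "a \<in> In (n + k)"
    using a(1) stratum_mono[of k "n + k"] by auto
  then show "finite (members_supported_in (In (n + k)) A)"
    using finite_members_supported_in[OF stratum_ideal a(2) stratum_step] fin by blast
  show "members_supported_in (In (n + k)) A \<subseteq> {d. E d A}"
    unfolding members_supported_in_def by blast
next
  show "(\<Union>n. members_supported_in (In (n + k)) A) = {d. E d A}"
    by (rule UN_members_supported_in_strata[OF W])
  show "\<exists>b\<in>(\<Union>n. In n). \<forall>g\<in>pstab G \<phi> b. \<forall>n. fixes_set \<phi> E lab g (members_supported_in (In (n + k)) A)"
    using fixes_set_members_supported_in[OF stratum_ideal stratum_invariant a(2)] a(1) by blast
qed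

end

lemma stratified_presentation_of_stratified:
  fixes G :: "('g, 'm) monoid_scheme" and X :: "'x set" and \<phi> :: "'g \<Rightarrow> 'x \<Rightarrow> 'x"
    and E :: "'c \<Rightarrow> 'c \<Rightarrow> bool" and lab :: "'c \<Rightarrow> 'x option"
  assumes "stratified G X \<phi> I" "presentation X E lab"
  obtains In where "I = (\<Union>n. In n)" "stratified_presentation G X \<phi> E lab In"
proof -
  from assms(1) obtain In where dyn: "dynamical_ideal G X \<phi> I" and I: "I = (\<Union>n. In n)"
    and strata: "\<forall>n. set_ideal X (In n) \<and> invariant_family G \<phi> (In n)"
    and Suc: "\<forall>n. In n \<subseteq> In (Suc n)"
    and step: "\<forall>n a (bs :: nat \<Rightarrow> 'x set). a \<in> In n \<longrightarrow> (\<forall>m. bs m \<in> In n) \<longrightarrow>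
      (\<exists>gs. (\<forall>m. gs m \<in> pstab G \<phi> a) \<and> (\<Union>m. \<phi> (gs m) ` bs m) \<in> In (Suc n))"
    unfolding stratified_def by blast
  have "presented_action G X \<phi> E lab"
    using dyn assms(2) by (simp add: dynamical_ideal_def presented_action_def presented_action_axioms_def)
  moreover have "stratified_presentation_axioms G X \<phi> In"
    using strata Suc step unfolding stratified_presentation_axioms_def by blast
  ultimately show thesis
    using that I by (blast intro: stratified_presentation.intro)
qed

theorem mainTheorem19:
  fixes G :: "('g, 'm) monoid_scheme" and X :: "'x set" and \<phi> :: "'g \<Rightarrow> 'x \<Rightarrow> 'x"
    and I :: "'x set set"
    and E :: "'c \<Rightarrow> 'c \<Rightarrow> bool" and lab :: "'c \<Rightarrow> 'x option" and A :: 'c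
  assumes "stratified G X \<phi> I"
    and "presentation X E lab"
    and "in_W G \<phi> I E lab A"
  shows "(\<exists>F :: nat \<Rightarrow> 'c set.
            (\<forall>n. finite (F n) \<and> F n \<subseteq> {d. E d A}) \<and> (\<Union>n. F n) = {d. E d A} \<and>
            (\<exists>b\<in>I. \<forall>g\<in>pstab G \<phi> b. \<forall>n. fixes_set \<phi> E lab g (F n)))
       \<or> (\<exists>f :: nat \<Rightarrow> 'c. inj f \<and> (\<forall>n. E (f n) A) \<and>
            (\<exists>b\<in>I. \<forall>g\<in>pstab G \<phi> b. \<forall>n. moves_to \<phi> E lab g (f n) (f n)))"
proof -
  obtain In where I: "I = (\<Union>n. In n)" and strat: "stratified_presentation G X \<phi> E lab In"
    using stratified_presentation_of_stratified[OF assms(1,2)] .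
  interpret stratified_presentation G X \<phi> E lab In
    by (rule strat)
  obtain a k0 where a: "a \<in> In k0" "supports a A"
    using in_W_supported[OF assms(3) rtranclp.rtrancl_refl] I by blast
  show ?thesis
  proof (cases "\<exists>d\<in>I. infinite (members_supported_by d A)")
    case True
    then obtain d where d: "d \<in> I" "infinite (members_supported_by d A)"
      by blast
    have "\<exists>f :: nat \<Rightarrow> 'c. inj f \<and> (\<forall>n. E (f n) A) \<and>
      (\<exists>b\<in>I. \<forall>g\<in>pstab G \<phi> b. \<forall>n. moves_to \<phi> E lab g (f n) (f n))"
      using infinite_members_supported_by_injection[OF d(2)] d(1) by blast
    then show ?thesis
      by (rule disjI2)
  next
    case False
    then have "\<And>d. d \<in> (\<Union>n. In n) \<Longrightarrow> finite (members_supported_by d A)"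
      unfolding I by blast
    from members_countable_union_of_finite[OF assms(3)[unfolded I] a this] show ?thesis
      unfolding I by (rule disjI1)
  qed
qed

end
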